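(* Let $m\ge d\ge1$, $\lambda=d/m$, $p$ a polynomial of degree $d$ with nonnegative real roots and largest root $R$, and define on $\{(x,y):x,y>\sqrt R\}$ \[ F(x,y)=-\frac1{\sqrt{md}}\log\big[y^{m-d}p(xy)\big]. \] Then $F$ is convex, and for every $z>\sqrt R$, $\partial_xF(z,z)\,\partial_yF(z,z)=\mathcal H(z)$, where $\mathcal H(z)=\mathcal G(z)\big(\lambda\mathcal G(z)+\frac{1-\lambda}{z}\big)$ and $\mathcal G(z)=\frac1d\frac{zp'(z^2)}{p(z^2)}$.
   Context: $p(xy)>0$ when $x,y>\sqrt R$ (for $p$ with positive leading coefficient), so $F$ is well defined there. *)

theory Defs
  imports "HOL-Analysis.Analysis" "HOL-Computational_Algebra.Polynomial"
begin

definition nonneg_real_rooted :: "real poly \<Rightarrow> bool" where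
  "nonneg_real_rooted p \<longleftrightarrow>
     (\<forall>z::complex. poly (map_poly complex_of_real p) z = 0 \<longrightarrow> z \<in> \<real> \<and> Re z \<ge> 0)"

definition largest_root :: "real poly \<Rightarrow> real" where
  "largest_root p = Max {x. poly p x = 0}"

definition Ffun :: "nat \<Rightarrow> nat \<Rightarrow> real poly \<Rightarrow> real \<Rightarrow> real \<Rightarrow> real" where
  "Ffun m d p x y = - (1 / sqrt (real m * real d)) * ln (y ^ (m - d) * poly p (x * y))"

definition Gfun :: "nat \<Rightarrow> real poly \<Rightarrow> real \<Rightarrow> real" where
  "Gfun d p z = (1 / real d) * (z * poly (pderiv p) (z\<^sup>2) / poly p (z\<^sup>2))"

definition Hfun :: "nat \<Rightarrow> nat \<Rightarrow> real poly \<Rightarrow> real \<Rightarrow> real" where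
  "Hfun m d p z = (let lam = real d / real m in
      Gfun d p z * (lam * Gfun d p z + (1 - lam) / z))"

end

theory Submission
  imports Defs "HOL-Computational_Algebra.Fundamental_Theorem_Algebra"
begin

text \<open>
  Write \<open>p(t) = c (t - r\<^sub>1) \<cdots> (t - r\<^sub>d)\<close> with \<open>c > 0\<close> and \<open>r\<^sub>i \<ge> 0\<close>. Then
  \<open>log (y^(m-d) p(xy)) = (m - d) log y + log c + \<Sum>\<^sub>i (log x + log (y - r\<^sub>i / x))\<close>,
  and every summand is concave: \<open>y - r\<^sub>i / x\<close> is concave because \<open>1 / x\<close> is convex,
  and the logarithm of a positive concave function is concave.
\<close>

lemma nonneg_real_rooted_factor:
  fixes p :: "real poly"
  assumes "nonneg_real_rooted p"
  obtains r where "\<And>i. i < degree p \<Longrightarrow> r i \<ge> 0"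
    and "\<And>t. poly p t = lead_coeff p * (\<Prod>i<degree p. t - r i)"
proof -
  define q where "q = map_poly complex_of_real p"
  obtain z where z: "smult (lead_coeff q) (\<Prod>i<degree q. [:- z i, 1:]) = q"
    using complex_poly_decompose' by blast
  have deg: "degree q = degree p" and lead: "lead_coeff q = complex_of_real (lead_coeff p)"
    unfolding q_def by (simp_all add: degree_map_poly coeff_map_poly)
  have poly_q: "poly q w = of_real (lead_coeff p) * (\<Prod>i<degree p. w - z i)" for w
    using arg_cong[OF z, of "\<lambda>q. poly q w"] deg lead by (simp add: poly_prod)
  have root: "z i \<in> \<real> \<and> Re (z i) \<ge> 0" if "i < degree p" for i
  proof -
    have "poly q (z i) = 0"
      using that by (auto simp: poly_q intro!: prod_zero)
    then show ?thesis
      using assms unfolding nonneg_real_rooted_def q_def by blast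
  qed
  show ?thesis
  proof (rule that[of "\<lambda>i. Re (z i)"])
    show "Re (z i) \<ge> 0" if "i < degree p" for i
      using root that by blast
    fix t
    have "complex_of_real (poly p t) = poly q (of_real t)"
      unfolding q_def by (induction p) (auto simp: map_poly_pCons)
    also have "\<dots> = of_real (lead_coeff p) * (\<Prod>i<degree p. of_real t - of_real (Re (z i)))"
      unfolding poly_q using root by (intro arg_cong2[where f = "(*)"] prod.cong refl)
        (auto elim!: Reals_cases)
    also have "\<dots> = complex_of_real (lead_coeff p * (\<Prod>i<degree p. t - Re (z i)))"
      by simp
    finally show "poly p t = lead_coeff p * (\<Prod>i<degree p. t - Re (z i))"
      using of_real_eq_iff by blast
  qed
qed

lemma largest_root_factored:
  fixes r :: "nat \<Rightarrow> real"
  assumes "c \<noteq> 0" and "\<And>t. poly p t = c * (\<Prod>i<n. t - r i)"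
  shows "largest_root p = Max (r ` {..<n})"
proof -
  have "{x. poly p x = 0} = r ` {..<n}"
    using assms by auto
  then show ?thesis
    unfolding largest_root_def by simp
qed

lemma nonneg_real_rooted_factor_le_largest_root:
  fixes p :: "real poly"
  assumes "nonneg_real_rooted p" "degree p > 0"
  obtains r where "\<And>i. i < degree p \<Longrightarrow> 0 \<le> r i" "\<And>i. i < degree p \<Longrightarrow> r i \<le> largest_root p"
    and "\<And>t. poly p t = lead_coeff p * (\<Prod>i<degree p. t - r i)"
proof -
  obtain r where nonneg: "\<And>i. i < degree p \<Longrightarrow> 0 \<le> r i"
    and factored: "\<And>t. poly p t = lead_coeff p * (\<Prod>i<degree p. t - r i)"
    using nonneg_real_rooted_factor[OF assms(1)] by blast
  have "lead_coeff p \<noteq> 0"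
    using assms(2) by auto
  then have "largest_root p = Max (r ` {..<degree p})"
    using factored by (rule largest_root_factored)
  then have "r i \<le> largest_root p" if "i < degree p" for i
    using that by simp
  with nonneg factored show ?thesis
    using that by blast
qed

lemma mult_gt_if_sqrt_less:
  fixes R x y :: real
  assumes "0 \<le> R" "sqrt R < x" "sqrt R < y"
  shows "R < x * y"
proof -
  have "sqrt R * sqrt R < x * y"
    using assms real_sqrt_ge_zero[OF assms(1)] by (intro mult_strict_mono) linarith+
  then show ?thesis
    using assms(1) by simp
qed

lemma convex_on_cong:
  assumes "convex_on S f" "\<And>x. x \<in> S \<Longrightarrow> f x = g x"
  shows "convex_on S g"
  using assms unfolding convex_on_def by (metis convexD)

lemma convex_on_sum_fun:
  assumes "finite I" "convex S" "\<And>i. i \<in> I \<Longrightarrow> convex_on S (f i)"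
  shows "convex_on S (\<lambda>x. \<Sum>i\<in>I. f i x)"
  using assms by (induction I rule: finite_induct) (auto simp: convex_on_const)

lemma convex_on_neg_ln:
  fixes g :: "'a::real_vector \<Rightarrow> real"
  assumes "concave_on S g" "\<And>x. x \<in> S \<Longrightarrow> g x > 0"
  shows "convex_on S (\<lambda>x. - ln (g x))"
  unfolding convex_on_def
proof (intro conjI ballI allI impI)
  show "convex S"
    using assms(1) by (rule concave_on_imp_convex)
  fix x y and u v :: real
  assume xy: "x \<in> S" "y \<in> S" and uv: "0 \<le> u" "0 \<le> v" "u + v = 1"
  have pos: "0 < u * g x + v * g y"
    using assms(2)[OF xy(1)] assms(2)[OF xy(2)] uv
    by (cases "u = 0") (simp_all add: add_pos_nonneg)
  have "u * ln (g x) + v * ln (g y) \<le> ln (u * g x + v * g y)"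
    using ln_concave assms(2) xy uv unfolding concave_on_iff by simp
  also have "\<dots> \<le> ln (g (u *\<^sub>R x + v *\<^sub>R y))"
    using assms(1) xy uv pos unfolding concave_on_iff by (intro ln_mono) auto
  finally show "- ln (g (u *\<^sub>R x + v *\<^sub>R y)) \<le> u * - ln (g x) + v * - ln (g y)"
    by simp
qed

lemma concave_on_snd_minus_div_fst:
  fixes r :: real
  assumes "convex S" "r \<ge> 0" "\<And>x y. (x, y) \<in> S \<Longrightarrow> 0 < x"
  shows "concave_on S (\<lambda>(x, y). y - r / x)"
  unfolding concave_on_iff
proof (intro conjI ballI allI impI)
  show "convex S" by fact
  fix a b and u v :: real
  assume ab: "a \<in> S" "b \<in> S" and uv: "0 \<le> u" "0 \<le> v" "u + v = 1"
  obtain x0 y0 x1 y1 where a: "a = (x0, y0)" and b: "b = (x1, y1)"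
    by fastforce
  have x: "x0 > 0" "x1 > 0"
    using ab assms(3) a b by auto
  have "inverse (u * x0 + v * x1) \<le> u * inverse x0 + v * inverse x1"
    using convex_on_inverse[of "{0<..}"] x uv unfolding convex_on_def by auto
  then have "r * inverse (u * x0 + v * x1) \<le> r * (u * inverse x0 + v * inverse x1)"
    using assms(2) by (rule mult_left_mono)
  then have "r / (u * x0 + v * x1) \<le> u * (r / x0) + v * (r / x1)"
    by (simp add: divide_inverse algebra_simps)
  then show "u * (case a of (x, y) \<Rightarrow> y - r / x) + v * (case b of (x, y) \<Rightarrow> y - r / x)
         \<le> (case u *\<^sub>R a + v *\<^sub>R b of (x, y) \<Rightarrow> y - r / x)"
    using a b by (simp add: algebra_simps)
qed

lemma convex_on_neg_ln_mult_minus: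
  fixes r :: real
  assumes "convex S" "r \<ge> 0" "\<And>x y. (x, y) \<in> S \<Longrightarrow> 0 < x \<and> r < x * y"
  shows "convex_on S (\<lambda>(x, y). - ln (x * y - r))"
proof -
  have pos: "0 < x" "0 < y - r / x" if "(x, y) \<in> S" for x y
    using assms(3)[OF that] by (simp_all add: field_simps)
  have "concave_on S fst"
    using assms(1) by (simp add: concave_on_iff)
  then have "convex_on S (\<lambda>z. - ln (fst z))"
    using pos by (intro convex_on_neg_ln) auto
  moreover have "convex_on S (\<lambda>z. - ln (case z of (x, y) \<Rightarrow> y - r / x))"
    using pos assms by (intro convex_on_neg_ln concave_on_snd_minus_div_fst) auto
  ultimately have "convex_on S (\<lambda>z. - ln (fst z) + - ln (case z of (x, y) \<Rightarrow> y - r / x))"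
    by (rule convex_on_add)
  moreover have "- ln (x * y - r) = - ln x + - ln (y - r / x)" if "(x, y) \<in> S" for x y
  proof -
    have "x * y - r = x * (y - r / x)"
      using pos(1)[OF that] by (simp add: field_simps)
    then show ?thesis
      using pos[OF that] by (simp add: ln_mult)
  qed
  ultimately show ?thesis
    by (force intro: convex_on_cong)
qed

lemma convex_on_Ffun:
  fixes r :: "nat \<Rightarrow> real"
  assumes "convex S" "c > 0" "\<And>t. poly p t = c * (\<Prod>i<n. t - r i)"
    and "\<And>i. i < n \<Longrightarrow> 0 \<le> r i"
    and "\<And>x y. (x, y) \<in> S \<Longrightarrow> 0 < x \<and> 0 < y \<and> (\<forall>i<n. r i < x * y)"
  shows "convex_on S (\<lambda>(x, y). Ffun m d p x y)"
proof -
  define K where "K = 1 / sqrt (real m * real d)"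
  have "concave_on S snd"
    using assms(1) by (simp add: concave_on_iff)
  then have "convex_on S (\<lambda>z. - ln (snd z))"
    using assms(5) by (intro convex_on_neg_ln) auto
  moreover have "convex_on S (\<lambda>z. \<Sum>i<n. case z of (x, y) \<Rightarrow> - ln (x * y - r i))"
    using assms by (intro convex_on_sum_fun convex_on_neg_ln_mult_minus) auto
  ultimately have "convex_on S (\<lambda>z. K * (real (m - d) * - ln (snd z) + - ln c
                     + (\<Sum>i<n. case z of (x, y) \<Rightarrow> - ln (x * y - r i))))"
    using assms(1) by (intro convex_on_cmul convex_on_add) (auto simp: K_def convex_on_const)
  moreover have "Ffun m d p x y
      = K * (real (m - d) * - ln y + - ln c + (\<Sum>i<n. - ln (x * y - r i)))"
    if "(x, y) \<in> S" for x y
  proof -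
    have factors_pos: "\<forall>i\<in>{..<n}. 0 < x * y - r i"
      using assms(5)[OF that] by auto
    then have ln_factors: "ln (\<Prod>i<n. x * y - r i) = (\<Sum>i<n. ln (x * y - r i))"
      by (intro ln_prod) auto
    have "ln (y ^ (m - d) * poly p (x * y))
        = real (m - d) * ln y + ln c + (\<Sum>i<n. ln (x * y - r i))"
      using assms(2,3) assms(5)[OF that] factors_pos
      by (auto simp: ln_mult ln_realpow prod_pos ln_factors)
    then show ?thesis
      unfolding Ffun_def K_def[symmetric] by (simp add: sum_negf algebra_simps)
  qed
  ultimately show ?thesis
    by (force intro: convex_on_cong)
qed

lemma Ffun_has_derivative_fst:
  assumes "y > 0" "poly p (x * y) > 0"
  shows "((\<lambda>x. Ffun m d p x y) has_real_derivative
           - (1 / sqrt (real m * real d)) * (y * poly (pderiv p) (x * y) / poly p (x * y))) (at x)"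
proof -
  have "((\<lambda>x. ln (y ^ (m - d) * poly p (x * y))) has_real_derivative
          y * poly (pderiv p) (x * y) / poly p (x * y)) (at x)"
    using assms by (auto intro!: derivative_eq_intros simp: field_simps)
  then show ?thesis
    unfolding Ffun_def by (rule DERIV_cmult)
qed

lemma Ffun_has_derivative_snd:
  assumes "y > 0" "poly p (x * y) > 0"
  shows "((\<lambda>y. Ffun m d p x y) has_real_derivative
           - (1 / sqrt (real m * real d))
             * (real (m - d) / y + x * poly (pderiv p) (x * y) / poly p (x * y))) (at y)"
proof -
  have pow: "real (m - d) * y ^ (m - Suc d) = real (m - d) * y ^ (m - d) / y"
    using assms(1) by (cases "d < m") (simp_all add: power_diff)
  have "((\<lambda>y. ln (y ^ (m - d) * poly p (x * y))) has_real_derivative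
          real (m - d) / y + x * poly (pderiv p) (x * y) / poly p (x * y)) (at y)"
    using assms by (auto intro!: derivative_eq_intros simp: pow field_simps)
  then show ?thesis
    unfolding Ffun_def by (rule DERIV_cmult)
qed

lemma Ffun_partials_product_diagonal:
  assumes "1 \<le> d" "d \<le> m" "z > 0" "poly p (z * z) > 0"
  shows "\<exists>Dx Dy. ((\<lambda>x. Ffun m d p x z) has_real_derivative Dx) (at z)
              \<and> ((\<lambda>y. Ffun m d p z y) has_real_derivative Dy) (at z)
              \<and> Dx * Dy = Hfun m d p z"
proof (intro exI conjI)
  let ?g = "z * poly (pderiv p) (z * z) / poly p (z * z)"
  show "((\<lambda>x. Ffun m d p x z) has_real_derivative - (1 / sqrt (real m * real d)) * ?g) (at z)"
    using assms(3,4) by (rule Ffun_has_derivative_fst)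
  show "((\<lambda>y. Ffun m d p z y) has_real_derivative
          - (1 / sqrt (real m * real d)) * (real (m - d) / z + ?g)) (at z)"
    using assms(3,4) by (rule Ffun_has_derivative_snd)
  have "sqrt (real m * real d) * sqrt (real m * real d) = real m * real d"
    by simp
  then show "(- (1 / sqrt (real m * real d)) * ?g)
           * (- (1 / sqrt (real m * real d)) * (real (m - d) / z + ?g)) = Hfun m d p z"
    using assms unfolding Hfun_def Gfun_def Let_def power2_eq_square
    by (simp add: field_simps of_nat_diff)
qed

theorem mainTheorem17:
  fixes m d :: nat and p :: "real poly"
  assumes "1 \<le> d" and "d \<le> m"
    and "degree p = d"
    and "lead_coeff p > 0"
    and "nonneg_real_rooted p"
  shows "convex_on ({sqrt (largest_root p)<..} \<times> {sqrt (largest_root p)<..})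
           (\<lambda>(x, y). Ffun m d p x y)
       \<and> (\<forall>z > sqrt (largest_root p).
            \<exists>Dx Dy. ((\<lambda>x. Ffun m d p x z) has_real_derivative Dx) (at z)
                  \<and> ((\<lambda>y. Ffun m d p z y) has_real_derivative Dy) (at z)
                  \<and> Dx * Dy = Hfun m d p z)"
proof -
  define R where "R = largest_root p"
  obtain r where r_nonneg: "\<And>i. i < d \<Longrightarrow> 0 \<le> r i" and r_le_R: "\<And>i. i < d \<Longrightarrow> r i \<le> R"
    and factored: "\<And>t. poly p t = lead_coeff p * (\<Prod>i<d. t - r i)"
    using nonneg_real_rooted_factor_le_largest_root[OF assms(5)] assms(1,3) unfolding R_def
    by (metis less_le_trans zero_less_one)
  have "0 \<le> R"
    using r_nonneg[of 0] r_le_R[of 0] assms(1) by simp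
  have domain: "0 < x \<and> 0 < y \<and> (\<forall>i<d. r i < x * y)" if xy: "sqrt R < x" "sqrt R < y" for x y
  proof (intro conjI allI impI)
    show "0 < x" "0 < y"
      using xy real_sqrt_ge_zero[OF \<open>0 \<le> R\<close>] by linarith+
    show "r i < x * y" if "i < d" for i
      using r_le_R[OF that] mult_gt_if_sqrt_less[OF \<open>0 \<le> R\<close> xy] by linarith
  qed
  have "convex ({sqrt R<..} \<times> {sqrt R<..})"
    by (intro convex_Times convex_real_interval)
  then have "convex_on ({sqrt R<..} \<times> {sqrt R<..}) (\<lambda>(x, y). Ffun m d p x y)"
    using assms(4) factored r_nonneg domain by (rule convex_on_Ffun) auto
  moreover have "poly p (z * z) > 0" if "sqrt R < z" for z
    using domain[OF that that] assms(4) unfolding factored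
    by (intro mult_pos_pos prod_pos) auto
  ultimately show ?thesis
    using Ffun_partials_product_diagonal[OF assms(1,2)] domain unfolding R_def by blast
qed

end
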